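(* Let $\mathbb{P}$ be a class of closed formulas, and let $P$ be a proof in $\mathbf{FBPI}^{\mathbb{P}}$ of a safety problem $\Pi$. Then $\operatorname{Inv}_{\mathrm{pro}}^\rightleftharpoons(P)$ is a safe inductive invariant of $\Pi$, and if $P$ contains $n\in\mathbb{N}$ instances of the rule (Ind) and every predicate in $\mathbb{P}$ has quantification depth at most $d$, then $\operatorname{Inv}_{\mathrm{pro}}^\rightleftharpoons(P)$ has quantification depth at most $n\cdot d$.
   Context: A first-order vocabulary $\Sigma$ consists of constant, function and relation symbols; $\Sigma'=\{a' : a\in\Sigma\}$ is a disjoint copy, and for a formula $\varphi$, $\varphi'$ denotes $\varphi$ with every vocabulary symbol replaced by its primed copy. A safety problem over $\Sigma$ is a triple $(\iota,\tau,\beta)$, where $\iota,\beta$ are closed formulas over $\Sigma$ and $\tau$ is a closed formula over $\Sigma\uplus\Sigma'$. $A\Rightarrow B$ means the implication $A\to B$ is valid; $\tau^{-1}$ is $\tau$ with each symbol and its primed counterpart swapped. A closed formula $\varphi$ over $\Sigma$ is a safe inductive invariant of $(\iota,\tau,\beta)$ if $\iota\Rightarrow\varphi$, $\varphi\wedge\tau\Rightarrow\varphi'$ and $\varphi\Rightarrow\neg\beta$. Quantification depth is the maximal nesting depth of quantifiers. Proofs: a proof of $\Pi$ in a system is a finite tree whose nodes are safety problems (possibly over different vocabularies), whose root is $\Pi$, and in which each node together with its children is an instance of one of the system's rules, with side conditions valid. $\mathbf{FBPI}$ has the rules (for problems over $\Sigma$, $\varphi$ ranging over closed formulas over $\Sigma$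 in the first four): (Ind): no premises; conclusion $(\iota,\tau,\neg\varphi)$; side conditions $\iota\Rightarrow\varphi$ and $\varphi\wedge\tau\Rightarrow\varphi'$. (Cons): premise $(\iota,\tau,\neg\varphi)$; conclusion $(\iota,\tau,\beta)$; side condition $\varphi\Rightarrow\neg\beta$. (Inc): premises $(\iota,\tau,\neg\varphi)$ and $(\iota\wedge\varphi,\ \tau\wedge\varphi\wedge\varphi',\ \beta\wedge\varphi)$; conclusion $(\iota,\tau,\beta)$. (Rev): premise $(\beta,\tau^{-1},\iota)$; conclusion $(\iota,\tau,\beta)$. (Proph): for $\Pi=(\iota,\tau,\beta)$ over $\Sigma$, a fresh constant symbol $w$, a fresh unary relation symbol $m$, and a formula $\varphi(x)$ over $\Sigma$ with free variable $x$: premises $\Pi^{\mathrm{sound}}_\varphi$ and $\Pi^w_\varphi$; conclusion $\Pi$, where $\varphi(w)$ is $\varphi$ with $x$ replaced by $w$, $\Pi^w_\varphi=\big(\iota\wedge\varphi(w),\ \varphi(w)\wedge\tau\wedge w'=w\wedge(\varphi(w))',\ \beta\wedge\varphi(w)\big)$ over $\Sigma\cup\{w\}$, and $\Pi^{\mathrm{sound}}_\varphi=\big(\iota\wedge\forall x.\,\varphi(x)\to m(x),\ \tau\wedge\forall x.\,(m(x)\wedge\varphi(x)\wedge\varphi'(x))\to m'(x),\ \beta\wedge\forall x.\,\varphi(x)\to\neg m(x)\big)$ over $\Sigma\cup\{m\}$. $\mathbf{FBPI}^{\mathbb{P}}$ is $\mathbf{FBPI}$ with applications of (Ind) restricted to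 $\varphi\in\mathbb{P}$. $\operatorname{Inv}_{\mathrm{pro}}^\rightleftharpoons(P)$ is defined by induction on $P$: if the root is the conclusion $(\iota,\tau,\neg\varphi)$ of (Ind), it is $\varphi$; for (Cons) with premise proof $\tilde P$ it is $\operatorname{Inv}_{\mathrm{pro}}^\rightleftharpoons(\tilde P)$; for (Inc) with premise proofs $P_1,P_2$ it is the conjunction of the two; for (Rev) with premise proof $\tilde P$ it is $\neg\operatorname{Inv}_{\mathrm{pro}}^\rightleftharpoons(\tilde P)$; for (Proph) with premise proofs $P_{\mathrm{sound}}$ of $\Pi^{\mathrm{sound}}_\varphi$ and $P_w$ of $\Pi^w_\varphi$, letting $\xi=\operatorname{Inv}_{\mathrm{pro}}^\rightleftharpoons(P_{\mathrm{sound}})$ and $\psi=\operatorname{Inv}_{\mathrm{pro}}^\rightleftharpoons(P_w)$ (with distinct bound variables), it is $\xi[\psi/m]$: the formula obtained from $\xi$ by replacing every atom $m(t)$, for any term $t$, by $\psi[t/w]$. *)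

theory Defs
  imports Main
begin

text \<open>Function symbols (constants are function symbols of arity 0) and relation
symbols carry a name, an arity and a flag telling whether the symbol is a primed copy.
Equality is built in.\<close>

datatype fsym = FSym (fname: nat) (farity: nat) (fprimed: bool)
datatype rsym = RSym (rname: nat) (rarity: nat) (rprimed: bool)

datatype trm = Var nat | Fn fsym "trm list"

datatype form =
    FTrue | FFalse
  | Atom rsym "trm list"
  | Eq trm trm
  | Neg form
  | Conj form form
  | Disj form form
  | Imp form form
  | All nat form
  | Ex nat form

type_synonym vocab = "fsym set \<times> rsym set"

definition is_vocab :: "vocab \<Rightarrow> bool" where
  "is_vocab V \<longleftrightarrow> (\<forall>f\<in>fst V. \<not> fprimed f) \<and> (\<forall>r\<in>snd V. \<not> rprimed r)"

definition prime_f :: "fsym \<Rightarrow> fsym" where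
  "prime_f f = FSym (fname f) (farity f) True"
definition prime_r :: "rsym \<Rightarrow> rsym" where
  "prime_r r = RSym (rname r) (rarity r) True"
definition swap_f :: "fsym \<Rightarrow> fsym" where
  "swap_f f = FSym (fname f) (farity f) (\<not> fprimed f)"
definition swap_r :: "rsym \<Rightarrow> rsym" where
  "swap_r r = RSym (rname r) (rarity r) (\<not> rprimed r)"

definition vboth :: "vocab \<Rightarrow> vocab" where
  "vboth V = (fst V \<union> prime_f ` fst V, snd V \<union> prime_r ` snd V)"

fun twf :: "vocab \<Rightarrow> trm \<Rightarrow> bool" where
  "twf V (Var x) = True"
| "twf V (Fn f ts) = (f \<in> fst V \<and> length ts = farity f \<and> (\<forall>t\<in>set ts. twf V t))"

fun fwf :: "vocab \<Rightarrow> form \<Rightarrow> bool" where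
  "fwf V FTrue = True"
| "fwf V FFalse = True"
| "fwf V (Atom r ts) = (r \<in> snd V \<and> length ts = rarity r \<and> (\<forall>t\<in>set ts. twf V t))"
| "fwf V (Eq s t) = (twf V s \<and> twf V t)"
| "fwf V (Neg p) = fwf V p"
| "fwf V (Conj p q) = (fwf V p \<and> fwf V q)"
| "fwf V (Disj p q) = (fwf V p \<and> fwf V q)"
| "fwf V (Imp p q) = (fwf V p \<and> fwf V q)"
| "fwf V (All x p) = fwf V p"
| "fwf V (Ex x p) = fwf V p"

fun tvars :: "trm \<Rightarrow> nat set" where
  "tvars (Var x) = {x}"
| "tvars (Fn f ts) = \<Union> (set (map tvars ts))"

fun fvars :: "form \<Rightarrow> nat set" where
  "fvars FTrue = {}"
| "fvars FFalse = {}"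
| "fvars (Atom r ts) = \<Union> (set (map tvars ts))"
| "fvars (Eq s t) = tvars s \<union> tvars t"
| "fvars (Neg p) = fvars p"
| "fvars (Conj p q) = fvars p \<union> fvars q"
| "fvars (Disj p q) = fvars p \<union> fvars q"
| "fvars (Imp p q) = fvars p \<union> fvars q"
| "fvars (All x p) = fvars p - {x}"
| "fvars (Ex x p) = fvars p - {x}"

definition closed :: "form \<Rightarrow> bool" where
  "closed p \<longleftrightarrow> fvars p = {}"

definition closed_over :: "vocab \<Rightarrow> form \<Rightarrow> bool" where
  "closed_over V p \<longleftrightarrow> fwf V p \<and> closed p"

fun tmap :: "(fsym \<Rightarrow> fsym) \<Rightarrow> trm \<Rightarrow> trm" where
  "tmap g (Var x) = Var x"
| "tmap g (Fn f ts) = Fn (g f) (map (tmap g) ts)"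

fun fmap :: "(fsym \<Rightarrow> fsym) \<Rightarrow> (rsym \<Rightarrow> rsym) \<Rightarrow> form \<Rightarrow> form" where
  "fmap g h FTrue = FTrue"
| "fmap g h FFalse = FFalse"
| "fmap g h (Atom r ts) = Atom (h r) (map (tmap g) ts)"
| "fmap g h (Eq s t) = Eq (tmap g s) (tmap g t)"
| "fmap g h (Neg p) = Neg (fmap g h p)"
| "fmap g h (Conj p q) = Conj (fmap g h p) (fmap g h q)"
| "fmap g h (Disj p q) = Disj (fmap g h p) (fmap g h q)"
| "fmap g h (Imp p q) = Imp (fmap g h p) (fmap g h q)"
| "fmap g h (All x p) = All x (fmap g h p)"
| "fmap g h (Ex x p) = Ex x (fmap g h p)"

definition fprime :: "form \<Rightarrow> form" where
  "fprime = fmap prime_f prime_r"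

text \<open>\<open>\<tau>\<^sup>-\<^sup>1\<close>: every symbol swapped with its primed counterpart.\<close>
definition finverse :: "form \<Rightarrow> form" where
  "finverse = fmap swap_f swap_r"

text \<open>Substitution of a closed term for a free variable (no capture possible).\<close>
fun tsubstv :: "nat \<Rightarrow> trm \<Rightarrow> trm \<Rightarrow> trm" where
  "tsubstv x s (Var y) = (if y = x then s else Var y)"
| "tsubstv x s (Fn f ts) = Fn f (map (tsubstv x s) ts)"

fun fsubstv :: "nat \<Rightarrow> trm \<Rightarrow> form \<Rightarrow> form" where
  "fsubstv x s FTrue = FTrue"
| "fsubstv x s FFalse = FFalse"
| "fsubstv x s (Atom r ts) = Atom r (map (tsubstv x s) ts)"
| "fsubstv x s (Eq a b) = Eq (tsubstv x s a) (tsubstv x s b)"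
| "fsubstv x s (Neg p) = Neg (fsubstv x s p)"
| "fsubstv x s (Conj p q) = Conj (fsubstv x s p) (fsubstv x s q)"
| "fsubstv x s (Disj p q) = Disj (fsubstv x s p) (fsubstv x s q)"
| "fsubstv x s (Imp p q) = Imp (fsubstv x s p) (fsubstv x s q)"
| "fsubstv x s (All y p) = (if y = x then All y p else All y (fsubstv x s p))"
| "fsubstv x s (Ex y p) = (if y = x then Ex y p else Ex y (fsubstv x s p))"

fun tsubstc :: "fsym \<Rightarrow> trm \<Rightarrow> trm \<Rightarrow> trm" where
  "tsubstc w t (Var y) = Var y"
| "tsubstc w t (Fn f ts) = (if f = w \<and> ts = [] then t else Fn f (map (tsubstc w t) ts))"

fun fsubstc :: "fsym \<Rightarrow> trm \<Rightarrow> form \<Rightarrow> form" where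
  "fsubstc w t FTrue = FTrue"
| "fsubstc w t FFalse = FFalse"
| "fsubstc w t (Atom r ts) = Atom r (map (tsubstc w t) ts)"
| "fsubstc w t (Eq a b) = Eq (tsubstc w t a) (tsubstc w t b)"
| "fsubstc w t (Neg p) = Neg (fsubstc w t p)"
| "fsubstc w t (Conj p q) = Conj (fsubstc w t p) (fsubstc w t q)"
| "fsubstc w t (Disj p q) = Disj (fsubstc w t p) (fsubstc w t q)"
| "fsubstc w t (Imp p q) = Imp (fsubstc w t p) (fsubstc w t q)"
| "fsubstc w t (All y p) = All y (fsubstc w t p)"
| "fsubstc w t (Ex y p) = Ex y (fsubstc w t p)"

text \<open>Shifting all variable indices (free and bound) by \<open>k\<close>: for a closed formula this
is a renaming of bound variables, used to make bound variables distinct.\<close>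
fun tshift :: "nat \<Rightarrow> trm \<Rightarrow> trm" where
  "tshift k (Var y) = Var (y + k)"
| "tshift k (Fn f ts) = Fn f (map (tshift k) ts)"

fun fshift :: "nat \<Rightarrow> form \<Rightarrow> form" where
  "fshift k FTrue = FTrue"
| "fshift k FFalse = FFalse"
| "fshift k (Atom r ts) = Atom r (map (tshift k) ts)"
| "fshift k (Eq a b) = Eq (tshift k a) (tshift k b)"
| "fshift k (Neg p) = Neg (fshift k p)"
| "fshift k (Conj p q) = Conj (fshift k p) (fshift k q)"
| "fshift k (Disj p q) = Disj (fshift k p) (fshift k q)"
| "fshift k (Imp p q) = Imp (fshift k p) (fshift k q)"
| "fshift k (All y p) = All (y + k) (fshift k p)"
| "fshift k (Ex y p) = Ex (y + k) (fshift k p)"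

fun tmaxv :: "trm \<Rightarrow> nat" where
  "tmaxv (Var y) = y"
| "tmaxv (Fn f ts) = foldr max (map tmaxv ts) 0"

fun fmaxv :: "form \<Rightarrow> nat" where
  "fmaxv FTrue = 0"
| "fmaxv FFalse = 0"
| "fmaxv (Atom r ts) = foldr max (map tmaxv ts) 0"
| "fmaxv (Eq a b) = max (tmaxv a) (tmaxv b)"
| "fmaxv (Neg p) = fmaxv p"
| "fmaxv (Conj p q) = max (fmaxv p) (fmaxv q)"
| "fmaxv (Disj p q) = max (fmaxv p) (fmaxv q)"
| "fmaxv (Imp p q) = max (fmaxv p) (fmaxv q)"
| "fmaxv (All y p) = max y (fmaxv p)"
| "fmaxv (Ex y p) = max y (fmaxv p)"

text \<open>\<open>\<xi>[\<psi>/m]\<close>: replace every atom \<open>m(t)\<close> by \<open>\<psi>[t/w]\<close>, where \<open>\<psi>\<close> (closed) is first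
renamed apart so that its bound variables are distinct from all variables of \<open>\<xi>\<close>.\<close>
fun rsubst :: "rsym \<Rightarrow> (trm \<Rightarrow> form) \<Rightarrow> form \<Rightarrow> form" where
  "rsubst m G FTrue = FTrue"
| "rsubst m G FFalse = FFalse"
| "rsubst m G (Atom r ts) =
     (if r = m then (case ts of [t] \<Rightarrow> G t | _ \<Rightarrow> Atom r ts) else Atom r ts)"
| "rsubst m G (Eq a b) = Eq a b"
| "rsubst m G (Neg p) = Neg (rsubst m G p)"
| "rsubst m G (Conj p q) = Conj (rsubst m G p) (rsubst m G q)"
| "rsubst m G (Disj p q) = Disj (rsubst m G p) (rsubst m G q)"
| "rsubst m G (Imp p q) = Imp (rsubst m G p) (rsubst m G q)"
| "rsubst m G (All y p) = All y (rsubst m G p)"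
| "rsubst m G (Ex y p) = Ex y (rsubst m G p)"

definition subst_pred :: "form \<Rightarrow> rsym \<Rightarrow> fsym \<Rightarrow> form \<Rightarrow> form" where
  "subst_pred \<xi> m w \<psi> =
     rsubst m (\<lambda>t. fsubstc w t (fshift (Suc (fmaxv \<xi>)) \<psi>)) \<xi>"

fun qdepth :: "form \<Rightarrow> nat" where
  "qdepth FTrue = 0"
| "qdepth FFalse = 0"
| "qdepth (Atom r ts) = 0"
| "qdepth (Eq a b) = 0"
| "qdepth (Neg p) = qdepth p"
| "qdepth (Conj p q) = max (qdepth p) (qdepth q)"
| "qdepth (Disj p q) = max (qdepth p) (qdepth q)"
| "qdepth (Imp p q) = max (qdepth p) (qdepth q)"
| "qdepth (All y p) = Suc (qdepth p)"
| "qdepth (Ex y p) = Suc (qdepth p)"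

text \<open>Structures over the universe given by a type \<open>'a\<close> (every HOL type is nonempty).\<close>
record 'a struct =
  fint :: "fsym \<Rightarrow> 'a list \<Rightarrow> 'a"
  rint :: "rsym \<Rightarrow> 'a list \<Rightarrow> bool"

fun teval :: "'a struct \<Rightarrow> (nat \<Rightarrow> 'a) \<Rightarrow> trm \<Rightarrow> 'a" where
  "teval S e (Var x) = e x"
| "teval S e (Fn f ts) = fint S f (map (teval S e) ts)"

fun feval :: "'a struct \<Rightarrow> (nat \<Rightarrow> 'a) \<Rightarrow> form \<Rightarrow> bool" where
  "feval S e FTrue = True"
| "feval S e FFalse = False"
| "feval S e (Atom r ts) = rint S r (map (teval S e) ts)"
| "feval S e (Eq a b) = (teval S e a = teval S e b)"
| "feval S e (Neg p) = (\<not> feval S e p)"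
| "feval S e (Conj p q) = (feval S e p \<and> feval S e q)"
| "feval S e (Disj p q) = (feval S e p \<or> feval S e q)"
| "feval S e (Imp p q) = (feval S e p \<longrightarrow> feval S e q)"
| "feval S e (All x p) = (\<forall>a. feval S (e(x := a)) p)"
| "feval S e (Ex x p) = (\<exists>a. feval S (e(x := a)) p)"

definition valid_in :: "'a itself \<Rightarrow> form \<Rightarrow> bool" where
  "valid_in TY p \<longleftrightarrow> (\<forall>(S :: 'a struct) e. feval S e p)"

type_synonym problem = "form \<times> form \<times> form"

definition safety_problem :: "vocab \<Rightarrow> problem \<Rightarrow> bool" where
  "safety_problem V \<Pi> = (case \<Pi> of (\<iota>, \<tau>, \<beta>) \<Rightarrow>
     closed_over V \<iota> \<and> closed_over (vboth V) \<tau> \<and> closed_over V \<beta>)"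

definition safe_inductive_invariant :: "'a itself \<Rightarrow> vocab \<Rightarrow> problem \<Rightarrow> form \<Rightarrow> bool" where
  "safe_inductive_invariant TY V \<Pi> \<phi> = (case \<Pi> of (\<iota>, \<tau>, \<beta>) \<Rightarrow>
     closed_over V \<phi> \<and> valid_in TY (Imp \<iota> \<phi>) \<and>
     valid_in TY (Imp (Conj \<phi> \<tau>) (fprime \<phi>)) \<and> valid_in TY (Imp \<phi> (Neg \<beta>)))"

text \<open>Proof trees, recording the rule applied at each node and its parameters.
\<open>PProph w m x \<phi> Psound Pw\<close>: fresh constant \<open>w\<close>, fresh unary relation \<open>m\<close>,
formula \<open>\<phi>(x)\<close>, proofs of \<open>\<Pi>\<^sup>s\<^sup>o\<^sup>u\<^sup>n\<^sup>d\<close> and \<open>\<Pi>\<^sup>w\<close>.\<close>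
datatype fproof =
    PInd form
  | PCons form fproof
  | PInc form fproof fproof
  | PRev fproof
  | PProph fsym rsym nat form fproof fproof

definition prob_w :: "problem \<Rightarrow> fsym \<Rightarrow> nat \<Rightarrow> form \<Rightarrow> problem" where
  "prob_w \<Pi> w x \<phi> = (case \<Pi> of (\<iota>, \<tau>, \<beta>) \<Rightarrow>
     let \<phi>w = fsubstv x (Fn w []) \<phi> in
     (Conj \<iota> \<phi>w,
      Conj \<phi>w (Conj \<tau> (Conj (Eq (Fn (prime_f w) []) (Fn w [])) (fprime \<phi>w))),
      Conj \<beta> \<phi>w))"

definition prob_sound :: "problem \<Rightarrow> rsym \<Rightarrow> nat \<Rightarrow> form \<Rightarrow> problem" where
  "prob_sound \<Pi> m x \<phi> = (case \<Pi> of (\<iota>, \<tau>, \<beta>) \<Rightarrow>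
     (Conj \<iota> (All x (Imp \<phi> (Atom m [Var x]))),
      Conj \<tau> (All x (Imp (Conj (Atom m [Var x]) (Conj \<phi> (fprime \<phi>))) (Atom (prime_r m) [Var x]))),
      Conj \<beta> (All x (Imp \<phi> (Neg (Atom m [Var x]))))))"

fun fbpi_proof :: "'a itself \<Rightarrow> form set \<Rightarrow> vocab \<Rightarrow> problem \<Rightarrow> fproof \<Rightarrow> bool" where
  "fbpi_proof TY PP V (\<iota>, \<tau>, \<beta>) (PInd \<phi>) =
     (is_vocab V \<and> safety_problem V (\<iota>, \<tau>, \<beta>) \<and> \<phi> \<in> PP \<and> closed_over V \<phi> \<and>
      \<beta> = Neg \<phi> \<and> valid_in TY (Imp \<iota> \<phi>) \<and> valid_in TY (Imp (Conj \<phi> \<tau>) (fprime \<phi>)))"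
| "fbpi_proof TY PP V (\<iota>, \<tau>, \<beta>) (PCons \<phi> P) =
     (is_vocab V \<and> safety_problem V (\<iota>, \<tau>, \<beta>) \<and> closed_over V \<phi> \<and>
      valid_in TY (Imp \<phi> (Neg \<beta>)) \<and> fbpi_proof TY PP V (\<iota>, \<tau>, Neg \<phi>) P)"
| "fbpi_proof TY PP V (\<iota>, \<tau>, \<beta>) (PInc \<phi> P1 P2) =
     (is_vocab V \<and> safety_problem V (\<iota>, \<tau>, \<beta>) \<and> closed_over V \<phi> \<and>
      fbpi_proof TY PP V (\<iota>, \<tau>, Neg \<phi>) P1 \<and>
      fbpi_proof TY PP V (Conj \<iota> \<phi>, Conj \<tau> (Conj \<phi> (fprime \<phi>)), Conj \<beta> \<phi>) P2)"
| "fbpi_proof TY PP V (\<iota>, \<tau>, \<beta>) (PRev P) =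
     (is_vocab V \<and> safety_problem V (\<iota>, \<tau>, \<beta>) \<and>
      fbpi_proof TY PP V (\<beta>, finverse \<tau>, \<iota>) P)"
| "fbpi_proof TY PP V (\<iota>, \<tau>, \<beta>) (PProph w m x \<phi> Ps Pw) =
     (is_vocab V \<and> safety_problem V (\<iota>, \<tau>, \<beta>) \<and>
      farity w = 0 \<and> \<not> fprimed w \<and> w \<notin> fst V \<and>
      rarity m = 1 \<and> \<not> rprimed m \<and> m \<notin> snd V \<and>
      fwf V \<phi> \<and> fvars \<phi> \<subseteq> {x} \<and>
      fbpi_proof TY PP (fst V, insert m (snd V)) (prob_sound (\<iota>, \<tau>, \<beta>) m x \<phi>) Ps \<and>
      fbpi_proof TY PP (insert w (fst V), snd V) (prob_w (\<iota>, \<tau>, \<beta>) w x \<phi>) Pw)"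

fun inv_pro :: "fproof \<Rightarrow> form" where
  "inv_pro (PInd \<phi>) = \<phi>"
| "inv_pro (PCons \<phi> P) = inv_pro P"
| "inv_pro (PInc \<phi> P1 P2) = Conj (inv_pro P1) (inv_pro P2)"
| "inv_pro (PRev P) = Neg (inv_pro P)"
| "inv_pro (PProph w m x \<phi> Ps Pw) = subst_pred (inv_pro Ps) m w (inv_pro Pw)"

fun count_ind :: "fproof \<Rightarrow> nat" where
  "count_ind (PInd \<phi>) = 1"
| "count_ind (PCons \<phi> P) = count_ind P"
| "count_ind (PInc \<phi> P1 P2) = count_ind P1 + count_ind P2"
| "count_ind (PRev P) = count_ind P"
| "count_ind (PProph w m x \<phi> Ps Pw) = count_ind Ps + count_ind Pw"

end

theory Submission
  imports Defs
begin

(* For (Proph), \<xi>[\<psi>/m] holds in a structure exactly when \<xi> holds after m is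
   interpreted as the set of values a for which \<psi> holds with w := a. Because \<psi> is a safe
   inductive invariant of \<Pi>^w, this interpretation satisfies the extra conjuncts of \<Pi>^sound
   (initiation, the m-to-m' step and safety), so the invariant \<xi> of \<Pi>^sound transfers to
   \<xi>[\<psi>/m]. The depth bound holds since qdepth (\<xi>[\<psi>/m]) \<le> qdepth \<xi> + qdepth \<psi>. *)

section \<open>Renaming and updating structures\<close>

definition rename_struct :: "(fsym \<Rightarrow> fsym) \<Rightarrow> (rsym \<Rightarrow> rsym) \<Rightarrow> 'a struct \<Rightarrow> 'a struct" where
  "rename_struct g h S = \<lparr>fint = fint S \<circ> g, rint = rint S \<circ> h\<rparr>"

lemma fint_rename_struct [simp]: "fint (rename_struct g h S) = fint S \<circ> g"
  by (simp add: rename_struct_def)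

lemma rint_rename_struct [simp]: "rint (rename_struct g h S) = rint S \<circ> h"
  by (simp add: rename_struct_def)

lemma teval_tmap: "teval S e (tmap g t) = teval (rename_struct g h S) e t"
  by (induction t) (simp_all cong: map_cong)

lemma feval_fmap: "feval S e (fmap g h p) = feval (rename_struct g h S) e p"
  by (induction p arbitrary: e) (simp_all add: teval_tmap[where h = h] cong: map_cong)

lemma feval_fprime: "feval S e (fprime p) = feval (rename_struct prime_f prime_r S) e p"
  by (simp add: fprime_def feval_fmap)

lemma feval_finverse: "feval S e (finverse p) = feval (rename_struct swap_f swap_r S) e p"
  by (simp add: finverse_def feval_fmap)

lemma fprime_simps [simp]:
  "fprime (Neg p) = Neg (fprime p)"
  "fprime (Conj p q) = Conj (fprime p) (fprime q)"
  by (simp_all add: fprime_def)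

(* Only the nullary reading of w changes, so terms applying w to arguments keep their value. *)
definition update_const :: "'a struct \<Rightarrow> fsym \<Rightarrow> 'a \<Rightarrow> 'a struct" where
  "update_const S w a = S\<lparr>fint := (fint S)(w := (\<lambda>as. if as = [] then a else fint S w as))\<rparr>"

definition update_rel :: "'a struct \<Rightarrow> rsym \<Rightarrow> ('a list \<Rightarrow> bool) \<Rightarrow> 'a struct" where
  "update_rel S m R = S\<lparr>rint := (rint S)(m := R)\<rparr>"

lemma fint_update_const [simp]:
  "fint (update_const S w a) = (fint S)(w := (\<lambda>as. if as = [] then a else fint S w as))"
  by (simp add: update_const_def)

lemma rint_update_const [simp]: "rint (update_const S w a) = rint S"
  by (simp add: update_const_def)

lemma fint_update_rel [simp]: "fint (update_rel S m R) = fint S"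
  by (simp add: update_rel_def)

lemma rint_update_rel [simp]: "rint (update_rel S m R) = (rint S)(m := R)"
  by (simp add: update_rel_def)

lemma fprimed_prime_f [simp]: "fprimed (prime_f f)"
  by (simp add: prime_f_def)

lemma rprimed_prime_r [simp]: "rprimed (prime_r r)"
  by (simp add: prime_r_def)

lemma prime_f_neq_unprimed: "\<not> fprimed w \<Longrightarrow> prime_f f \<noteq> w"
  by auto

lemma prime_r_neq_unprimed: "\<not> rprimed m \<Longrightarrow> prime_r r \<noteq> m"
  by auto

lemma rename_struct_prime_update_const:
  "\<not> fprimed w \<Longrightarrow> rename_struct prime_f prime_r (update_const S w a) = rename_struct prime_f prime_r S"
  by (simp add: rename_struct_def fun_eq_iff prime_f_neq_unprimed)

lemma rename_struct_prime_update_rel: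
  "\<not> rprimed m \<Longrightarrow> rename_struct prime_f prime_r (update_rel S m R) = rename_struct prime_f prime_r S"
  by (simp add: rename_struct_def fun_eq_iff prime_r_neq_unprimed)

lemma teval_cong_vocab:
  assumes "twf V t" and "\<And>f. f \<in> fst V \<Longrightarrow> fint S f = fint T f"
  shows "teval S e t = teval T e t"
  using assms(1)
proof (induction t)
  case (Fn f ts)
  then have "map (teval S e) ts = map (teval T e) ts" by auto
  with Fn.prems show ?case by (simp add: assms(2) del: map_eq_conv)
qed simp

lemma feval_cong_vocab:
  assumes "fwf V p"
    and "\<And>f. f \<in> fst V \<Longrightarrow> fint S f = fint T f" and "\<And>r. r \<in> snd V \<Longrightarrow> rint S r = rint T r"
  shows "feval S e p = feval T e p"
  using assms(1)
proof (induction p arbitrary: e)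
  case (Atom r ts)
  then have "map (teval S e) ts = map (teval T e) ts"
    using teval_cong_vocab[of V _ S T] assms(2) by auto
  with Atom.prems show ?case by (simp add: assms(3) del: map_eq_conv)
qed (simp_all add: teval_cong_vocab[of V _ S T] assms(2))

lemma feval_update_const_fresh:
  "fwf V p \<Longrightarrow> w \<notin> fst V \<Longrightarrow> feval (update_const S w a) e p = feval S e p"
  by (rule feval_cong_vocab) auto

lemma feval_update_rel_fresh:
  "fwf V p \<Longrightarrow> m \<notin> snd V \<Longrightarrow> feval (update_rel S m R) e p = feval S e p"
  by (rule feval_cong_vocab) auto

lemma teval_cong_fint: "fint S = fint T \<Longrightarrow> teval S e t = teval T e t"
proof (induction t)
  case (Fn f ts)
  then have "map (teval S e) ts = map (teval T e) ts" by auto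
  with Fn.prems show ?case by (simp del: map_eq_conv)
qed simp

lemma teval_update_rel [simp]: "teval (update_rel S m R) = teval S"
  by (intro ext teval_cong_fint) simp

lemma teval_cong_env: "\<forall>v\<in>tvars t. e v = e' v \<Longrightarrow> teval S e t = teval S e' t"
proof (induction t)
  case (Fn f ts)
  then have "map (teval S e) ts = map (teval S e') ts" by auto
  then show ?case by (simp del: map_eq_conv)
qed simp

lemma feval_cong_env: "\<forall>v\<in>fvars p. e v = e' v \<Longrightarrow> feval S e p = feval S e' p"
proof (induction p arbitrary: e e')
  case (Atom r ts)
  then have "map (teval S e) ts = map (teval S e') ts" using teval_cong_env[of _ e e' S] by auto
  then show ?case by (simp del: map_eq_conv)
next
  case (All x p)
  have "feval S (e(x := a)) p = feval S (e'(x := a)) p" for a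
    using All.prems by (intro All.IH) auto
  then show ?case by simp
next
  case (Ex x p)
  have "feval S (e(x := a)) p = feval S (e'(x := a)) p" for a
    using Ex.prems by (intro Ex.IH) auto
  then show ?case by simp
next
  case (Eq a b)
  then show ?case using teval_cong_env[of a e e' S] teval_cong_env[of b e e' S] by simp
next
  case (Conj p q)
  have "feval S e p = feval S e' p" "feval S e q = feval S e' q"
    using Conj.prems by (intro Conj.IH; simp)+
  then show ?case by simp
next
  case (Disj p q)
  have "feval S e p = feval S e' p" "feval S e q = feval S e' q"
    using Disj.prems by (intro Disj.IH; simp)+
  then show ?case by simp
next
  case (Imp p q)
  have "feval S e p = feval S e' p" "feval S e q = feval S e' q"
    using Imp.prems by (intro Imp.IH; simp)+
  then show ?case by simp
qed simp_all

lemma feval_closed: "closed p \<Longrightarrow> feval S e p = feval S e' p"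
  by (rule feval_cong_env) (simp add: closed_def)

lemma teval_closed: "tvars t = {} \<Longrightarrow> teval S e t = teval S e' t"
  by (rule teval_cong_env) simp

section \<open>Substitution\<close>

lemma teval_tsubstv:
  "tvars c = {} \<Longrightarrow> teval S e (tsubstv x c s) = teval S (e(x := teval S e c)) s"
proof (induction s)
  case (Fn f ts)
  then have "\<forall>t\<in>set ts. teval S e (tsubstv x c t) = teval S (e(x := teval S e c)) t" by blast
  then have "map (teval S e \<circ> tsubstv x c) ts = map (teval S (e(x := teval S e c))) ts"
    by (simp only: map_eq_conv o_apply)
  then show ?case by (simp only: teval.simps tsubstv.simps map_map)
qed simp

lemma feval_fsubstv:
  assumes "tvars c = {}"
  shows "feval S e (fsubstv x c p) = feval S (e(x := teval S e c)) p"
proof (induction p arbitrary: e)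
  case (Atom r ts)
  have "map (teval S e \<circ> tsubstv x c) ts = map (teval S (e(x := teval S e c))) ts"
    using teval_tsubstv[OF assms] by auto
  then show ?case by (simp only: feval.simps fsubstv.simps map_map)
next
  case (Eq a b)
  then show ?case by (simp only: feval.simps fsubstv.simps teval_tsubstv[OF assms])
next
  case (All y p)
  have "feval S (e(y := a)) (fsubstv x c p) = feval S (e(x := teval S e c, y := a)) p"
    if "y \<noteq> x" for a
  proof -
    have "feval S (e(y := a)) (fsubstv x c p) = feval S (e(y := a, x := teval S (e(y := a)) c)) p"
      by (rule All.IH)
    also have "teval S (e(y := a)) c = teval S e c" by (rule teval_closed[OF assms])
    finally show ?thesis using that by (simp only: fun_upd_twist)
  qed
  then show ?case by (simp del: fun_upd_apply)
next
  case (Ex y p)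
  have "feval S (e(y := a)) (fsubstv x c p) = feval S (e(x := teval S e c, y := a)) p"
    if "y \<noteq> x" for a
  proof -
    have "feval S (e(y := a)) (fsubstv x c p) = feval S (e(y := a, x := teval S (e(y := a)) c)) p"
      by (rule Ex.IH)
    also have "teval S (e(y := a)) c = teval S e c" by (rule teval_closed[OF assms])
    finally show ?thesis using that by (simp only: fun_upd_twist)
  qed
  then show ?case by (simp del: fun_upd_apply)
qed simp_all

lemma teval_tsubstc_tshift:
  assumes "\<forall>v\<in>tvars t. v < k"
  shows "teval S e (tsubstc w t (tshift k s)) = teval (update_const S w (teval S e t)) (\<lambda>y. e (y + k)) s"
proof (induction s)
  case (Fn f ts)
  let ?S = "update_const S w (teval S e t)"
  show ?case
  proof (cases "f = w \<and> ts = []")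
    case False
    have "map (\<lambda>s. teval S e (tsubstc w t (tshift k s))) ts = map (teval ?S (\<lambda>y. e (y + k))) ts"
      using Fn by auto
    moreover have "fint S f as = fint ?S f as" if "length as = length ts" for as
      using False that by auto
    ultimately show ?thesis using False by (auto simp: comp_def simp del: map_eq_conv fint_update_const)
  qed simp
qed simp

(* Shifting the variables of the substituted formula above those of t avoids capture. *)
lemma feval_fsubstc_fshift:
  assumes "\<forall>v\<in>tvars t. v < k"
  shows "feval S e (fsubstc w t (fshift k p)) = feval (update_const S w (teval S e t)) (\<lambda>y. e (y + k)) p"
proof (induction p arbitrary: e)
  case (Atom r ts)
  have "map (\<lambda>s. teval S e (tsubstc w t (tshift k s))) ts
      = map (teval (update_const S w (teval S e t)) (\<lambda>y. e (y + k))) ts"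
    using teval_tsubstc_tshift[OF assms] by auto
  then show ?case by (simp add: comp_def del: map_eq_conv)
next
  case (Eq a b)
  show ?case by (simp add: teval_tsubstc_tshift[OF assms])
next
  case (All y p)
  have "feval S (e(y + k := a)) (fsubstc w t (fshift k p)) =
        feval (update_const S w (teval S e t)) ((\<lambda>z. e (z + k))(y := a)) p" for a
  proof -
    have "teval S (e(y + k := a)) t = teval S e t"
      using assms by (intro teval_cong_env) auto
    moreover have "(\<lambda>z. (e(y + k := a)) (z + k)) = (\<lambda>z. e (z + k))(y := a)"
      by auto
    ultimately show ?thesis using All.IH[of "e(y + k := a)"] by (simp only:)
  qed
  then show ?case by simp
next
  case (Ex y p)
  have "feval S (e(y + k := a)) (fsubstc w t (fshift k p)) =
        feval (update_const S w (teval S e t)) ((\<lambda>z. e (z + k))(y := a)) p" for a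
  proof -
    have "teval S (e(y + k := a)) t = teval S e t"
      using assms by (intro teval_cong_env) auto
    moreover have "(\<lambda>z. (e(y + k := a)) (z + k)) = (\<lambda>z. e (z + k))(y := a)"
      by auto
    ultimately show ?thesis using Ex.IH[of "e(y + k := a)"] by (simp only:)
  qed
  then show ?case by simp
qed simp_all

lemma member_le_foldr_max: "(x::nat) \<in> set xs \<Longrightarrow> x \<le> foldr max xs 0"
  by (induction xs) auto

lemma tvars_le_tmaxv: "v \<in> tvars t \<Longrightarrow> v \<le> tmaxv t"
proof (induction t)
  case (Fn f ts)
  then obtain s where "s \<in> set ts" "v \<in> tvars s" by auto
  then show ?case using Fn.IH member_le_foldr_max[of "tmaxv s" "map tmaxv ts"] by force
qed simp

lemma feval_rsubst:
  assumes "fmaxv p < k"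
    and "\<And>e t. \<forall>v\<in>tvars t. v < k \<Longrightarrow> feval S e (G t) = R [teval S e t]"
    and "\<And>as. length as \<noteq> 1 \<Longrightarrow> R as = rint S m as"
  shows "feval S e (rsubst m G p) = feval (update_rel S m R) e p"
  using assms(1)
proof (induction p arbitrary: e)
  case (Atom r ts)
  show ?case
  proof (cases "r = m \<and> length ts = 1")
    case True
    then obtain t where ts: "ts = [t]" by (auto simp: length_Suc_conv)
    have "\<forall>v\<in>tvars t. v < k" using Atom.prems tvars_le_tmaxv[of _ t] by (fastforce simp: ts)
    then show ?thesis using assms(2) ts True by simp
  next
    case False
    then have "rsubst m G (Atom r ts) = Atom r ts"
      by (cases ts rule: list.exhaust; cases "tl ts"; auto)
    with False show ?thesis using assms(3)[of "map (teval S e) ts"] by auto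
  qed
qed simp_all

(* The reading of m under which \<xi>[\<psi>/m] means \<xi>; rsubst leaves atoms of m with the wrong
   arity untouched, so those keep their old interpretation. *)
definition subst_pred_interp :: "fsym \<Rightarrow> form \<Rightarrow> rsym \<Rightarrow> 'a struct \<Rightarrow> (nat \<Rightarrow> 'a) \<Rightarrow> 'a list \<Rightarrow> bool" where
  "subst_pred_interp w \<psi> m S e as =
     (case as of [a] \<Rightarrow> feval (update_const S w a) e \<psi> | _ \<Rightarrow> rint S m as)"

lemma subst_pred_interp_singleton [simp]:
  "subst_pred_interp w \<psi> m S e [a] = feval (update_const S w a) e \<psi>"
  by (simp add: subst_pred_interp_def)

lemma feval_subst_pred:
  assumes "closed \<psi>"
  shows "feval S e (subst_pred \<xi> m w \<psi>) = feval (update_rel S m (subst_pred_interp w \<psi> m S e)) e \<xi>"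
  unfolding subst_pred_def
proof (rule feval_rsubst[where k = "Suc (fmaxv \<xi>)"])
  fix e' t assume "\<forall>v\<in>tvars t. v < Suc (fmaxv \<xi>)"
  then show "feval S e' (fsubstc w t (fshift (Suc (fmaxv \<xi>)) \<psi>)) =
      subst_pred_interp w \<psi> m S e [teval S e' t]"
    using feval_closed[OF assms] by (simp add: feval_fsubstc_fshift)
next
  fix as :: "'a list" assume "length as \<noteq> 1"
  then show "subst_pred_interp w \<psi> m S e as = rint S m as"
    by (cases as rule: list.exhaust; cases "tl as"; simp add: subst_pred_interp_def)
qed simp

lemma qdepth_fshift [simp]: "qdepth (fshift k p) = qdepth p"
  by (induction p) auto

lemma qdepth_fsubstc [simp]: "qdepth (fsubstc w t p) = qdepth p"
  by (induction p) auto

lemma qdepth_rsubst: "(\<And>t. qdepth (G t) \<le> D) \<Longrightarrow> qdepth (rsubst m G p) \<le> qdepth p + D"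
proof (induction p)
  case (Atom r ts)
  then show ?case by (cases ts rule: list.exhaust; cases "tl ts"; auto)
qed fastforce+

lemma qdepth_subst_pred: "qdepth (subst_pred \<xi> m w \<psi>) \<le> qdepth \<xi> + qdepth \<psi>"
  unfolding subst_pred_def by (rule qdepth_rsubst) simp

lemma tvars_tshift: "tvars (tshift k t) = (\<lambda>y. y + k) ` tvars t"
  by (induction t) auto

lemma fvars_fshift: "fvars (fshift k p) = (\<lambda>y. y + k) ` fvars p"
proof -
  have "inj (\<lambda>y::nat. y + k)" by (simp add: inj_def)
  then show ?thesis by (induction p) (auto simp: tvars_tshift image_set_diff)
qed

lemma tvars_tsubstc: "tvars (tsubstc w t s) \<subseteq> tvars s \<union> tvars t"
  by (induction s) auto

lemma fvars_fsubstc: "fvars (fsubstc w t p) \<subseteq> fvars p \<union> tvars t"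
  by (induction p) (use tvars_tsubstc[of w t] in fastforce)+

lemma fvars_rsubst: "(\<And>t. fvars (G t) \<subseteq> tvars t) \<Longrightarrow> fvars (rsubst m G p) \<subseteq> fvars p"
proof (induction p)
  case (Atom r ts)
  then show ?case by (cases ts rule: list.exhaust; cases "tl ts"; auto)
qed auto

lemma closed_subst_pred:
  assumes "closed \<xi>" and "closed \<psi>"
  shows "closed (subst_pred \<xi> m w \<psi>)"
proof -
  have "fvars (fsubstc w t (fshift (Suc (fmaxv \<xi>)) \<psi>)) \<subseteq> tvars t" for t
    using fvars_fsubstc[of w t "fshift (Suc (fmaxv \<xi>)) \<psi>"] assms(2)
    by (simp add: closed_def fvars_fshift)
  then show ?thesis
    using fvars_rsubst[of "\<lambda>t. fsubstc w t (fshift (Suc (fmaxv \<xi>)) \<psi>)" m \<xi>] assms(1)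
    by (simp add: closed_def subst_pred_def)
qed

lemma twf_cong_fst: "fst V = fst W \<Longrightarrow> twf V t = twf W t"
  by (induction t) auto

lemma twf_tshift [simp]: "twf V (tshift k t) = twf V t"
  by (induction t) auto

lemma fwf_fshift [simp]: "fwf V (fshift k p) = fwf V p"
  by (induction p) auto

lemma twf_tsubstc:
  "twf (insert w (fst V), snd V) s \<Longrightarrow> twf V t \<Longrightarrow> farity w = 0 \<Longrightarrow> twf V (tsubstc w t s)"
  by (induction s) auto

lemma fwf_fsubstc:
  "fwf (insert w (fst V), snd V) p \<Longrightarrow> twf V t \<Longrightarrow> farity w = 0 \<Longrightarrow> fwf V (fsubstc w t p)"
  by (induction p) (auto simp: twf_tsubstc)

lemma fwf_rsubst:
  assumes "fwf (fst V, insert m (snd V)) p" and "rarity m = 1" and "\<And>t. twf V t \<Longrightarrow> fwf V (G t)"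
  shows "fwf V (rsubst m G p)"
proof -
  have twf_iff: "twf (fst V, insert m (snd V)) t = twf V t" for t
    by (rule twf_cong_fst) simp
  from assms(1) show ?thesis
  proof (induction p)
    case (Atom r ts)
    then show ?case
      using assms(2,3) by (cases ts rule: list.exhaust; cases "tl ts"; auto simp: twf_iff)
  qed (auto simp: twf_iff)
qed

lemma closed_over_subst_pred:
  assumes "closed_over (fst V, insert m (snd V)) \<xi>" and "closed_over (insert w (fst V), snd V) \<psi>"
    and "rarity m = 1" and "farity w = 0"
  shows "closed_over V (subst_pred \<xi> m w \<psi>)"
proof -
  have "fwf V (subst_pred \<xi> m w \<psi>)"
    unfolding subst_pred_def
    by (rule fwf_rsubst) (use assms in \<open>auto simp: closed_over_def intro: fwf_fsubstc\<close>)
  with assms show ?thesis by (simp add: closed_over_def closed_subst_pred)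
qed

lemma twf_mono: "twf V t \<Longrightarrow> fst V \<subseteq> fst W \<Longrightarrow> twf W t"
  by (induction t) auto

lemma fwf_mono: "fwf V p \<Longrightarrow> fst V \<subseteq> fst W \<Longrightarrow> snd V \<subseteq> snd W \<Longrightarrow> fwf W p"
  by (induction p) (auto intro: twf_mono)

lemma fwf_vboth: "fwf V p \<Longrightarrow> fwf (vboth V) p"
  by (erule fwf_mono) (auto simp: vboth_def)

lemma twf_tmap_prime: "twf V t \<Longrightarrow> twf (vboth V) (tmap prime_f t)"
  by (induction t) (auto simp: vboth_def prime_f_def)

lemma fwf_fprime:
  assumes "fwf V p"
  shows "fwf (vboth V) (fprime p)"
proof -
  have "prime_r r \<in> snd (vboth V)" if "r \<in> snd V" for r
    using that by (simp add: vboth_def)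
  moreover have "rarity (prime_r r) = rarity r" for r
    by (simp add: prime_r_def)
  ultimately show ?thesis
    using assms unfolding fprime_def by (induction p) (auto simp: twf_tmap_prime)
qed

lemma prime_f_eq_iff: "\<not> fprimed f \<Longrightarrow> \<not> fprimed g \<Longrightarrow> prime_f f = prime_f g \<longleftrightarrow> f = g"
  by (cases f; cases g) (simp add: prime_f_def)

lemma prime_r_eq_iff: "\<not> rprimed r \<Longrightarrow> \<not> rprimed s \<Longrightarrow> prime_r r = prime_r s \<longleftrightarrow> r = s"
  by (cases r; cases s) (simp add: prime_r_def)

lemma is_vocab_insert_const: "is_vocab V \<Longrightarrow> \<not> fprimed w \<Longrightarrow> is_vocab (insert w (fst V), snd V)"
  by (simp add: is_vocab_def)

lemma is_vocab_insert_rel: "is_vocab V \<Longrightarrow> \<not> rprimed m \<Longrightarrow> is_vocab (fst V, insert m (snd V))"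
  by (simp add: is_vocab_def)

lemma fresh_const_vboth:
  assumes "is_vocab V" and "\<not> fprimed w" and "w \<notin> fst V"
  shows "w \<notin> fst (vboth V)" and "prime_f w \<notin> fst (vboth V)"
  using assms by (auto simp: vboth_def is_vocab_def prime_f_eq_iff)

lemma fresh_rel_vboth:
  assumes "is_vocab V" and "\<not> rprimed m" and "m \<notin> snd V"
  shows "m \<notin> snd (vboth V)" and "prime_r m \<notin> snd (vboth V)"
  using assms by (auto simp: vboth_def is_vocab_def prime_r_eq_iff)

lemma feval_fprime_update_const_prime:
  assumes "is_vocab V" and "\<not> fprimed w" and "fwf V p"
  shows "feval (update_const S (prime_f w) a) e (fprime p)
    = feval (update_const (rename_struct prime_f prime_r S) w a) e p"
  unfolding feval_fprime
  by (rule feval_cong_vocab[OF assms(3)]) (use assms in \<open>auto simp: is_vocab_def prime_f_eq_iff\<close>)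

lemma feval_fprime_update_rel_prime:
  assumes "is_vocab V" and "\<not> rprimed m" and "fwf V p"
  shows "feval (update_rel S (prime_r m) R) e (fprime p)
    = feval (update_rel (rename_struct prime_f prime_r S) m R) e p"
  unfolding feval_fprime
  by (rule feval_cong_vocab[OF assms(3)]) (use assms in \<open>auto simp: is_vocab_def prime_r_eq_iff\<close>)

lemma rename_struct_swap_swap [simp]:
  "rename_struct swap_f swap_r (rename_struct swap_f swap_r S) = S"
proof -
  have "swap_f \<circ> swap_f = id" "swap_r \<circ> swap_r = id"
    by (simp_all add: fun_eq_iff swap_f_def swap_r_def)
  then show ?thesis by (simp add: rename_struct_def comp_assoc)
qed

lemma feval_swap_unprimed:
  "is_vocab V \<Longrightarrow> fwf V p \<Longrightarrow> feval (rename_struct swap_f swap_r S) e p = feval S e (fprime p)"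
  unfolding feval_fprime
  by (rule feval_cong_vocab) (auto simp: is_vocab_def swap_f_def swap_r_def prime_f_def prime_r_def)

lemma swap_f_prime_f: "\<not> fprimed f \<Longrightarrow> swap_f (prime_f f) = f"
  by (cases f) (simp add: swap_f_def prime_f_def)

lemma swap_r_prime_r: "\<not> rprimed r \<Longrightarrow> swap_r (prime_r r) = r"
  by (cases r) (simp add: swap_r_def prime_r_def)

lemma feval_swap_fprime:
  "is_vocab V \<Longrightarrow> fwf V p \<Longrightarrow> feval (rename_struct swap_f swap_r S) e (fprime p) = feval S e p"
  unfolding feval_fprime
  by (rule feval_cong_vocab) (auto simp: is_vocab_def swap_f_prime_f swap_r_prime_r)

section \<open>Soundness of the rules\<close>

lemma safe_inductive_invariant_consequence:
  assumes "safe_inductive_invariant TY V (\<iota>, \<tau>, Neg \<phi>) J" and "valid_in TY (Imp \<phi> (Neg \<beta>))"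
  shows "safe_inductive_invariant TY V (\<iota>, \<tau>, \<beta>) J"
  using assms by (auto simp: safe_inductive_invariant_def valid_in_def)

lemma safe_inductive_invariant_conj:
  fixes TY :: "'a itself"
  assumes J1: "safe_inductive_invariant TY V (\<iota>, \<tau>, Neg \<phi>) J1"
    and J2: "safe_inductive_invariant TY V (Conj \<iota> \<phi>, Conj \<tau> (Conj \<phi> (fprime \<phi>)), Conj \<beta> \<phi>) J2"
  shows "safe_inductive_invariant TY V (\<iota>, \<tau>, \<beta>) (Conj J1 J2)"
proof -
  have J1_\<phi>: "feval S e \<phi>" if "feval S e J1" for S :: "'a struct" and e
    using J1 that by (auto simp: safe_inductive_invariant_def valid_in_def)
  then have "feval S e (fprime \<phi>)" if "feval S e (fprime J1)" for S :: "'a struct" and e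
    using that by (simp add: feval_fprime)
  with J1_\<phi> J1 J2 show ?thesis
    by (simp add: safe_inductive_invariant_def valid_in_def closed_over_def closed_def; meson)
qed

(* For J over the unprimed vocabulary, swapping primed and unprimed symbols exchanges J and J',
   so consecution of J for \<tau>^-1 becomes the contrapositive of consecution of \<not> J for \<tau>. *)
lemma safe_inductive_invariant_reverse:
  fixes TY :: "'a itself"
  assumes V: "is_vocab V" and J: "safe_inductive_invariant TY V (\<beta>, finverse \<tau>, \<iota>) J"
  shows "safe_inductive_invariant TY V (\<iota>, \<tau>, \<beta>) (Neg J)"
proof -
  have J_wf: "fwf V J" using J by (simp add: safe_inductive_invariant_def closed_over_def)
  have "\<not> feval S e (fprime J)" if "\<not> feval S e J" and "feval S e \<tau>" for S :: "'a struct" and e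
  proof
    assume "feval S e (fprime J)"
    with that(2) have "feval (rename_struct swap_f swap_r S) e J"
      and "feval (rename_struct swap_f swap_r S) e (finverse \<tau>)"
      by (simp_all add: feval_swap_unprimed[OF V J_wf] feval_finverse)
    then have "feval (rename_struct swap_f swap_r S) e (fprime J)"
      using J by (auto simp: safe_inductive_invariant_def valid_in_def)
    with that(1) show False by (simp add: feval_swap_fprime[OF V J_wf])
  qed
  with J show ?thesis
    by (auto simp: safe_inductive_invariant_def valid_in_def closed_over_def closed_def)
qed

locale prophecy =
  fixes TY :: "'a itself" and V :: vocab and \<iota> \<tau> \<beta> :: form
    and w :: fsym and m :: rsym and x :: nat and \<phi> \<xi> \<psi> :: form
  assumes vocab: "is_vocab V"
    and problem: "safety_problem V (\<iota>, \<tau>, \<beta>)"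
    and w_fresh: "\<not> fprimed w" "w \<notin> fst V" and w_arity: "farity w = 0"
    and m_fresh: "\<not> rprimed m" "m \<notin> snd V" and m_arity: "rarity m = 1"
    and \<phi>_wf: "fwf V \<phi>"
    and \<xi>_inv: "safe_inductive_invariant TY (fst V, insert m (snd V)) (prob_sound (\<iota>, \<tau>, \<beta>) m x \<phi>) \<xi>"
    and \<psi>_inv: "safe_inductive_invariant TY (insert w (fst V), snd V) (prob_w (\<iota>, \<tau>, \<beta>) w x \<phi>) \<psi>"
begin

lemma \<xi>_closed: "closed_over (fst V, insert m (snd V)) \<xi>"
  using \<xi>_inv by (simp add: safe_inductive_invariant_def prob_sound_def)

lemma \<psi>_closed: "closed_over (insert w (fst V), snd V) \<psi>"
  using \<psi>_inv by (simp add: safe_inductive_invariant_def prob_w_def Let_def)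

lemma closed_\<psi>: "closed \<psi>" and \<psi>_wf: "fwf (insert w (fst V), snd V) \<psi>"
  and \<xi>_wf: "fwf (fst V, insert m (snd V)) \<xi>"
  using \<psi>_closed \<xi>_closed by (simp_all add: closed_over_def)

lemma \<xi>_initiation:
  fixes S :: "'a struct"
  assumes "feval S e \<iota>" and "\<And>a. feval S (e(x := a)) \<phi> \<Longrightarrow> rint S m [a]"
  shows "feval S e \<xi>"
  using \<xi>_inv assms by (auto simp: safe_inductive_invariant_def prob_sound_def valid_in_def)

lemma \<xi>_consecution:
  fixes S :: "'a struct"
  assumes "feval S e \<xi>" and "feval S e \<tau>"
    and "\<And>a. rint S m [a] \<Longrightarrow> feval S (e(x := a)) \<phi> \<Longrightarrow> feval S (e(x := a)) (fprime \<phi>)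
      \<Longrightarrow> rint S (prime_r m) [a]"
  shows "feval S e (fprime \<xi>)"
  using \<xi>_inv assms by (auto simp: safe_inductive_invariant_def prob_sound_def valid_in_def)

lemma \<xi>_safety:
  fixes S :: "'a struct"
  assumes "feval S e \<xi>" and "feval S e \<beta>"
  shows "\<exists>a. feval S (e(x := a)) \<phi> \<and> rint S m [a]"
  using \<xi>_inv assms by (auto simp: safe_inductive_invariant_def prob_sound_def valid_in_def)

lemma \<psi>_initiation:
  fixes S :: "'a struct"
  assumes "feval S e \<iota>" and "feval S (e(x := fint S w [])) \<phi>"
  shows "feval S e \<psi>"
  using \<psi>_inv assms
  by (auto simp: safe_inductive_invariant_def prob_w_def valid_in_def Let_def feval_fsubstv)

lemma \<psi>_consecution:
  fixes S :: "'a struct"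
  assumes "feval S e \<psi>" and "feval S (e(x := fint S w [])) \<phi>" and "feval S e \<tau>"
    and "fint S (prime_f w) [] = fint S w []" and "feval S (e(x := fint S w [])) (fprime \<phi>)"
  shows "feval S e (fprime \<psi>)"
  using \<psi>_inv assms
  by (auto simp: safe_inductive_invariant_def prob_w_def valid_in_def Let_def feval_fsubstv feval_fprime)

lemma \<psi>_safety:
  fixes S :: "'a struct"
  assumes "feval S e \<psi>" and "feval S e \<beta>"
  shows "\<not> feval S (e(x := fint S w [])) \<phi>"
  using \<psi>_inv assms
  by (auto simp: safe_inductive_invariant_def prob_w_def valid_in_def Let_def feval_fsubstv)

lemma fwf_vboth_problem [simp]:
  "fwf (vboth V) \<iota>" "fwf (vboth V) \<tau>" "fwf (vboth V) \<beta>" "fwf (vboth V) \<phi>" "fwf (vboth V) (fprime \<phi>)"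
  using problem \<phi>_wf
  by (auto simp: safety_problem_def closed_over_def intro: fwf_vboth fwf_fprime)

lemma feval_update_fresh [simp]:
  assumes "fwf (vboth V) p"
  shows "feval (update_const S w a) e p = feval S e p"
    and "feval (update_const S (prime_f w) a) e p = feval S e p"
    and "feval (update_rel S m R) e p = feval S e p"
    and "feval (update_rel S (prime_r m) R) e p = feval S e p"
  using assms fresh_const_vboth[OF vocab w_fresh] fresh_rel_vboth[OF vocab m_fresh]
  by (simp_all add: feval_update_const_fresh feval_update_rel_fresh)

lemma prime_neq [simp]: "prime_f w \<noteq> w" "w \<noteq> prime_f w" "prime_r m \<noteq> m" "m \<noteq> prime_r m"
  using w_fresh m_fresh prime_f_neq_unprimed prime_r_neq_unprimed by metis+

lemma feval_update_fresh_invariants [simp]: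
  "feval (update_rel S (prime_r m) R) e \<xi> = feval S e \<xi>"
  "feval (update_const S (prime_f w) a) e \<psi> = feval S e \<psi>"
proof -
  have "prime_r m \<notin> snd V" and "prime_f w \<notin> fst V"
    using vocab by (auto simp: is_vocab_def)
  then show "feval (update_rel S (prime_r m) R) e \<xi> = feval S e \<xi>"
    and "feval (update_const S (prime_f w) a) e \<psi> = feval S e \<psi>"
    using \<xi>_closed \<psi>_closed
    by (auto simp: closed_over_def intro!: feval_update_rel_fresh feval_update_const_fresh)
qed

lemma initiation:
  fixes S :: "'a struct"
  assumes \<iota>: "feval S e \<iota>"
  shows "feval S e (subst_pred \<xi> m w \<psi>)"
proof -
  let ?K = "update_rel S m (subst_pred_interp w \<psi> m S e)"
  have "feval ?K e \<xi>"
  proof (rule \<xi>_initiation)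
    show "feval ?K e \<iota>" using \<iota> by simp
    fix a
    assume "feval ?K (e(x := a)) \<phi>"
    then have "feval (update_const S w a) e \<psi>"
      using \<iota> by (intro \<psi>_initiation) simp_all
    then show "rint ?K m [a]" by simp
  qed
  then show ?thesis by (simp add: feval_subst_pred[OF closed_\<psi>])
qed

lemma safety:
  fixes S :: "'a struct"
  assumes \<chi>: "feval S e (subst_pred \<xi> m w \<psi>)"
  shows "\<not> feval S e \<beta>"
proof
  assume \<beta>: "feval S e \<beta>"
  let ?K = "update_rel S m (subst_pred_interp w \<psi> m S e)"
  have "feval ?K e \<xi>" using \<chi> by (simp add: feval_subst_pred[OF closed_\<psi>])
  then obtain a where "feval ?K (e(x := a)) \<phi>" and "rint ?K m [a]"
    using \<xi>_safety \<beta> by force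
  then have "feval (update_const S w a) (e(x := a)) \<phi>" and "feval (update_const S w a) e \<psi>"
    by simp_all
  with \<beta> show False using \<psi>_safety[of "update_const S w a" e] by simp
qed

lemma consecution:
  fixes S :: "'a struct"
  assumes \<chi>: "feval S e (subst_pred \<xi> m w \<psi>)" and \<tau>: "feval S e \<tau>"
  shows "feval S e (fprime (subst_pred \<xi> m w \<psi>))"
proof -
  let ?S' = "rename_struct prime_f prime_r S"
  let ?K = "update_rel S m (subst_pred_interp w \<psi> m S e)"
  let ?T = "update_rel ?K (prime_r m) (subst_pred_interp w \<psi> m ?S' e)"
  \<comment> \<open>A value kept in m by a step is one for which \<psi> holds with w = w' = a before the step,
     hence with w := a after it.\<close>
  have "feval ?T e (fprime \<xi>)"
  proof (rule \<xi>_consecution)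
    show "feval ?T e \<xi>" using \<chi> by (simp add: feval_subst_pred[OF closed_\<psi>])
    show "feval ?T e \<tau>" using \<tau> by simp
    fix a
    assume m_a: "rint ?T m [a]" and \<phi>_a: "feval ?T (e(x := a)) \<phi>"
      and \<phi>'_a: "feval ?T (e(x := a)) (fprime \<phi>)"
    let ?U = "update_const (update_const S w a) (prime_f w) a"
    have "feval ?U e (fprime \<psi>)"
    proof (rule \<psi>_consecution)
      show "feval ?U e \<psi>" using m_a by simp
      show "feval ?U (e(x := fint ?U w [])) \<phi>" using \<phi>_a by simp
      show "feval ?U e \<tau>" using \<tau> by simp
      show "fint ?U (prime_f w) [] = fint ?U w []" by simp
      show "feval ?U (e(x := fint ?U w [])) (fprime \<phi>)" using \<phi>'_a by simp
    qed
    then show "rint ?T (prime_r m) [a]"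
      using w_fresh
      by (simp add: feval_fprime_update_const_prime[OF is_vocab_insert_const[OF vocab] _ \<psi>_wf]
          rename_struct_prime_update_const)
  qed
  also have "feval ?T e (fprime \<xi>) = feval (update_rel ?S' m (subst_pred_interp w \<psi> m ?S' e)) e \<xi>"
    using m_fresh
    by (simp add: feval_fprime_update_rel_prime[OF is_vocab_insert_rel[OF vocab] _ \<xi>_wf]
        rename_struct_prime_update_rel)
  also have "\<dots> = feval S e (fprime (subst_pred \<xi> m w \<psi>))"
    by (simp add: feval_fprime feval_subst_pred[OF closed_\<psi>])
  finally show ?thesis .
qed

lemma safe_inductive_invariant_subst_pred:
  "safe_inductive_invariant TY V (\<iota>, \<tau>, \<beta>) (subst_pred \<xi> m w \<psi>)"
  using closed_over_subst_pred[OF \<xi>_closed \<psi>_closed m_arity w_arity] initiation safety consecution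
  by (simp add: safe_inductive_invariant_def valid_in_def)

end

lemma safe_inductive_invariant_inv_pro:
  "fbpi_proof TY PP V \<Pi> P \<Longrightarrow> safe_inductive_invariant TY V \<Pi> (inv_pro P)"
proof (induction TY PP V \<Pi> P rule: fbpi_proof.induct[case_names Ind Cons Inc Rev Proph])
  case Ind
  then show ?case by (auto simp: safe_inductive_invariant_def valid_in_def)
next
  case Cons
  then show ?case by (auto intro: safe_inductive_invariant_consequence)
next
  case Inc
  then show ?case by (auto intro: safe_inductive_invariant_conj)
next
  case Rev
  then show ?case by (auto intro: safe_inductive_invariant_reverse)
next
  case (Proph TY PP V \<iota> \<tau> \<beta> w m x \<phi> Ps Pw)
  then interpret prophecy TY V \<iota> \<tau> \<beta> w m x \<phi> "inv_pro Ps" "inv_pro Pw"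
    by unfold_locales auto
  show ?case by (simp add: safe_inductive_invariant_subst_pred)
qed

lemma qdepth_inv_pro_le:
  "fbpi_proof TY PP V \<Pi> P \<Longrightarrow> \<forall>\<phi>\<in>PP. qdepth \<phi> \<le> d \<Longrightarrow> qdepth (inv_pro P) \<le> count_ind P * d"
proof (induction TY PP V \<Pi> P rule: fbpi_proof.induct[case_names Ind Cons Inc Rev Proph])
  case (Proph TY PP V \<iota> \<tau> \<beta> w m x \<phi> Ps Pw)
  then show ?case
    using qdepth_subst_pred[of "inv_pro Ps" m w "inv_pro Pw"] by (auto simp: add_mult_distrib)
qed (auto simp: add_mult_distrib)

theorem theorem5p6:
  fixes PP :: "form set" and V :: vocab and \<Pi> :: problem and P :: fproof and n d :: nat
  assumes "\<forall>\<phi>\<in>PP. closed \<phi>"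
    and "fbpi_proof (TYPE('a)) PP V \<Pi> P"
  shows "safe_inductive_invariant (TYPE('a)) V \<Pi> (inv_pro P)
     \<and> ((count_ind P = n \<and> (\<forall>\<phi>\<in>PP. qdepth \<phi> \<le> d)) \<longrightarrow> qdepth (inv_pro P) \<le> n * d)"
  using safe_inductive_invariant_inv_pro[OF assms(2)] qdepth_inv_pro_le[OF assms(2)] by blast

end
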